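(* Let $V$ be as defined in the context. Then $V$ has the same distribution as $\sum_{i=1}^{K}Y_i$, where: - $K$ is Poisson with mean $\frac{\theta}{(1-q)\gamma}$; - $Y_1,Y_2,\dots$ are i.i.d. and independent of $K$, each distributed as the size at an independent time $X\sim\mathrm{Exp}(\delta)$ of a linear birth–death process with rates $\alpha,\beta$ started from one cell. In particular $\mathbb{E}[\varphi_X(z)]=1-(1-q)\,{}_2F_1(1,\gamma;1+\gamma;\xi(z))$, where $\varphi_s(z)=1-\frac{1-q}{1-\xi(z)e^{-\lambda s}}$ is the probability generating function of the birth–death process at time $s$. Equivalently, $$\log\mathbb{E}[z^V]=\frac{\theta}{(1-q)\gamma}\int_0^\infty(\varphi_t(z)-1)\,\delta e^{-\delta t}\,dt .$$
   Context: Fix $\delta>0$ and $\alpha>\beta\ge0$, put $\lambda=\alpha-\beta$, $q=\beta/\alpha$, $\gamma=\delta/\lambda$, and fix $\theta>0$. Let $\xi(z)=\frac{q-z}{1-z}$. Let $V$ be a random variable on $\{0,1,\dots\}$ with $\log\mathbb{E}[z^V]=-\frac{\theta}{\gamma}{}_2F_1(1,\gamma;1+\gamma;\xi(z))$ for $z\in[0,1)$, where ${}_2F_1$ is the Gauss hypergeometric function. (This $V$ is the distributional limit of the total mutant count as $N\to\infty$, $\nu=\alpha\theta/N$, in the model where the wild type is $e^{\delta t}$ and mutants appear at Poisson rate $\nu e^{\delta t}$.) *)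

theory Defs
  imports "HOL-Probability.Probability"
begin

definition hyp2F1_series :: "real \<Rightarrow> real \<Rightarrow> real \<Rightarrow> real \<Rightarrow> real" where
  "hyp2F1_series a b c x =
     (\<Sum>n. pochhammer a n * pochhammer b n / (pochhammer c n * fact n) * x ^ n)"

text \<open>Gauss hypergeometric function on the real half-line x < 1: the series for
  abs x < 1, and its analytic continuation via the Pfaff transformation
  F(a,b;c;x) = (1-x)^(-a) F(a,c-b;c;x/(x-1)) for x \<le> -1 (then x/(x-1) lies in [1/2,1)).\<close>
definition hyp2F1 :: "real \<Rightarrow> real \<Rightarrow> real \<Rightarrow> real \<Rightarrow> real" where
  "hyp2F1 a b c x =
     (if \<bar>x\<bar> < 1 then hyp2F1_series a b c x
      else if x < 0 then (1 - x) powr (-a) * hyp2F1_series a (c - b) c (x / (x - 1))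
      else undefined)"

definition xi :: "real \<Rightarrow> real \<Rightarrow> real" where
  "xi q z = (q - z) / (1 - z)"

text \<open>Probability generating function of the linear birth-death process (birth rate
  alpha, death rate beta, one initial cell) at time s: phi_s(z).\<close>
definition bd_pgf :: "real \<Rightarrow> real \<Rightarrow> real \<Rightarrow> real \<Rightarrow> real" where
  "bd_pgf \<alpha> \<beta> s z = 1 - (1 - \<beta>/\<alpha>) / (1 - xi (\<beta>/\<alpha>) z * exp (-(\<alpha> - \<beta>) * s))"

text \<open>Transient distribution of the linear birth-death process with birth rate alpha,
  death rate beta, started from one cell, at time s (Kendall 1948):
  P(Z_s = 0) = a_s, P(Z_s = n) = (1 - a_s)(1 - b_s) b_s^(n-1) for n \<ge> 1, where
  a_s = beta (e^{lambda s} - 1)/(alpha e^{lambda s} - beta),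
  b_s = alpha (e^{lambda s} - 1)/(alpha e^{lambda s} - beta).\<close>
definition bd_prob :: "real \<Rightarrow> real \<Rightarrow> real \<Rightarrow> nat \<Rightarrow> real" where
  "bd_prob \<alpha> \<beta> s n =
     (let E = exp ((\<alpha> - \<beta>) * s);
          a = \<beta> * (E - 1) / (\<alpha> * E - \<beta>);
          b = \<alpha> * (E - 1) / (\<alpha> * E - \<beta>)
      in if n = 0 then a else (1 - a) * (1 - b) * b ^ (n - 1))"

text \<open>Law of Y = Z_X with X ~ Exp(delta) independent of the birth-death process Z.\<close>
definition Y_prob :: "real \<Rightarrow> real \<Rightarrow> real \<Rightarrow> nat \<Rightarrow> real" where
  "Y_prob \<alpha> \<beta> \<delta> n = (LBINT s:{0..}. \<delta> * exp (-\<delta> * s) * bd_prob \<alpha> \<beta> s n)"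

end

theory Submission
  imports Defs
begin

(* V and the compound Poisson sum S = Y_1 + ... + Y_K have the same law because their
   generating functions agree on (0,1), and a law on the naturals is determined by its
   generating function there (uniqueness of power series). *)

lemma set_integrable_Ici_iff_Ioi:
  fixes f :: "real \<Rightarrow> real"
  shows "set_integrable lborel {0::real..} f \<longleftrightarrow> set_integrable lborel {0<..} f"
  by (rule set_integrable_discrete_difference[where X="{0}"]) auto

lemma set_integral_Ici_eq_Ioi:
  fixes f :: "real \<Rightarrow> real"
  shows "(LBINT t:{0::real..}. f t) = (LBINT t:{0<..}. f t)"
  by (rule set_integral_discrete_difference[where X="{0}"]) auto

lemma FTC_Ici_nonneg:
  fixes f F :: "real \<Rightarrow> real"
  assumes deriv: "\<And>x. x > 0 \<Longrightarrow> DERIV F x :> f x"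
    and cont: "\<And>x. x > 0 \<Longrightarrow> isCont f x"
    and nonneg: "\<And>x. x > 0 \<Longrightarrow> f x \<ge> 0"
    and at_0: "(F \<longlongrightarrow> A) (at_right 0)"
    and at_infty: "(F \<longlongrightarrow> 0) at_top"
  shows "set_integrable lborel {0..} f" "(LBINT t:{0..}. f t) = - A"
proof -
  have A': "((F \<circ> real_of_ereal) \<longlongrightarrow> A) (at_right (ereal 0))"
    using at_0 by (simp add: ereal_tendsto_simps)
  have B': "((F \<circ> real_of_ereal) \<longlongrightarrow> 0) (at_left \<infinity>)"
    using at_infty by (simp add: ereal_tendsto_simps)
  note FTC = interval_integral_FTC_nonneg[where a=0 and b=\<infinity> and F=F and f=f,
      OF _ _ _ _ A'[unfolded zero_ereal_def[symmetric]] B']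
  have "set_integrable lborel (einterval 0 \<infinity>) f"
    by (rule FTC(1)) (auto simp: zero_ereal_def intro: deriv cont nonneg)
  then show "set_integrable lborel {0..} f"
    by (simp add: set_integrable_Ici_iff_Ioi einterval_def zero_ereal_def greaterThan_def)
  have "(LBINT x=0..\<infinity>. f x) = 0 - A"
    by (rule FTC(2)) (auto simp: zero_ereal_def intro: deriv cont nonneg)
  then show "(LBINT t:{0..}. f t) = - A"
    by (simp add: set_integral_Ici_eq_Ioi interval_integral_Ioi zero_ereal_def)
qed

lemma FTC_Ici:
  fixes f F :: "real \<Rightarrow> real"
  assumes deriv: "\<And>x. x > 0 \<Longrightarrow> DERIV F x :> f x"
    and cont: "\<And>x. x > 0 \<Longrightarrow> isCont f x"
    and integrable: "set_integrable lborel {0..} f"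
    and at_0: "(F \<longlongrightarrow> A) (at_right 0)"
    and at_infty: "(F \<longlongrightarrow> 0) at_top"
  shows "(LBINT t:{0..}. f t) = - A"
proof -
  have A': "((F \<circ> real_of_ereal) \<longlongrightarrow> A) (at_right (ereal 0))"
    using at_0 by (simp add: ereal_tendsto_simps)
  have B': "((F \<circ> real_of_ereal) \<longlongrightarrow> 0) (at_left \<infinity>)"
    using at_infty by (simp add: ereal_tendsto_simps)
  have "(LBINT x=0..\<infinity>. f x) = 0 - A"
    by (rule interval_integral_FTC_integrable[where a=0 and b=\<infinity> and F=F and f=f,
          OF _ _ _ _ A'[unfolded zero_ereal_def[symmetric]] B'])
       (use integrable in \<open>auto simp: zero_ereal_def set_integrable_Ici_iff_Ioi einterval_def
          greaterThan_def has_real_derivative_iff_has_vector_derivative[symmetric]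
          intro: deriv cont\<close>)
  then show ?thesis
    by (simp add: set_integral_Ici_eq_Ioi interval_integral_Ioi zero_ereal_def)
qed

lemma exp_neg_at_top:
  fixes c :: real assumes "c > 0"
  shows "((\<lambda>t. exp (-c * t)) \<longlongrightarrow> 0) at_top"
  using assms by (auto intro!: exp_at_bot[THEN filterlim_compose] filterlim_tendsto_pos_mult_at_top
      filterlim_ident simp: filterlim_uminus_at_bot)

lemma exp_integral:
  fixes c :: real assumes c: "c > 0"
  shows "set_integrable lborel {0..} (\<lambda>t. exp (-c*t))"
    "(LBINT t:{0..}. exp (-c*t)) = 1/c"
proof -
  let ?F = "\<lambda>t. - exp (-c*t) / c"
  have deriv: "DERIV ?F x :> exp (-c*x)" for x
    using c by (auto intro!: derivative_eq_intros simp: field_simps)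
  have at_0: "(?F \<longlongrightarrow> -1/c) (at_right 0)"
    using c by (auto intro!: tendsto_eq_intros)
  have "(?F \<longlongrightarrow> - 0 / c) at_top"
    by (intro tendsto_divide tendsto_minus exp_neg_at_top c tendsto_const) (use c in auto)
  then have at_infty: "(?F \<longlongrightarrow> 0) at_top" by simp
  note FTC = FTC_Ici_nonneg[OF deriv _ _ at_0 at_infty]
  show "set_integrable lborel {0..} (\<lambda>t. exp (-c*t))" by (rule FTC) auto
  show "(LBINT t:{0..}. exp (-c*t)) = 1/c" using FTC(2) by simp
qed

lemma exp_density_integral:
  fixes c :: real assumes c: "c > 0"
  shows "set_integrable lborel {0..} (\<lambda>t. c * exp (-c*t))"
    "(LBINT t:{0..}. c * exp (-c*t)) = 1"
  using exp_integral[OF c] c by (auto intro: set_integrable_mult_right)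

lemma set_integral_sums:
  fixes f :: "nat \<Rightarrow> real \<Rightarrow> real"
  assumes integrable: "\<And>n. set_integrable lborel {0..} (f n)"
    and abs_summable: "\<And>t. t \<ge> 0 \<Longrightarrow> summable (\<lambda>n. \<bar>f n t\<bar>)"
    and integrals_summable: "summable (\<lambda>n. LBINT t:{0..}. \<bar>f n t\<bar>)"
  shows "(\<lambda>n. LBINT t:{0..}. f n t) sums (LBINT t:{0..}. (\<Sum>n. f n t))"
proof -
  let ?g = "\<lambda>n t. indicator {0..} t *\<^sub>R f n t"
  have norm_integral: "(\<integral>t. norm (?g n t) \<partial>lborel) = (LBINT t:{0..}. \<bar>f n t\<bar>)" for n
    unfolding set_lebesgue_integral_def
    by (intro Bochner_Integration.integral_cong) (auto simp: indicator_def)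
  have "(\<lambda>n. integral\<^sup>L lborel (?g n)) sums (\<integral>t. (\<Sum>n. ?g n t) \<partial>lborel)"
    by (rule sums_integral)
       (use integrable abs_summable integrals_summable norm_integral in
         \<open>auto simp: set_integrable_def indicator_def\<close>)
  moreover have "(\<Sum>n. ?g n t) = indicator {0..} t *\<^sub>R (\<Sum>n. f n t)" for t
    by (simp add: indicator_def)
  ultimately show ?thesis by (simp add: set_lebesgue_integral_def)
qed

lemma set_integral_sums_nonneg:
  fixes f :: "nat \<Rightarrow> real \<Rightarrow> real"
  assumes integrable: "\<And>n. set_integrable lborel {0..} (f n)"
    and nonneg: "\<And>n t. t \<ge> 0 \<Longrightarrow> f n t \<ge> 0"
    and pointwise: "\<And>t. t \<ge> 0 \<Longrightarrow> (\<lambda>n. f n t) sums g t"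
    and integrals_summable: "summable (\<lambda>n. LBINT t:{0..}. f n t)"
  shows "(\<lambda>n. LBINT t:{0..}. f n t) sums (LBINT t:{0..}. g t)"
proof -
  have abs_eq: "(LBINT t:{0..}. \<bar>f n t\<bar>) = (LBINT t:{0..}. f n t)" for n
    using nonneg by (intro set_lebesgue_integral_cong) auto
  have "(\<lambda>n. LBINT t:{0..}. f n t) sums (LBINT t:{0..}. (\<Sum>n. f n t))"
    by (rule set_integral_sums[OF integrable])
       (use nonneg pointwise integrals_summable abs_eq in \<open>auto simp: sums_iff\<close>)
  also have "(LBINT t:{0..}. (\<Sum>n. f n t)) = (LBINT t:{0..}. g t)"
    using pointwise by (intro set_lebesgue_integral_cong) (auto simp: sums_iff)
  finally show ?thesis .
qed

text \<open>Two elementary facts on rising factorials: (g)_n / (1+g)_n = g/(g+n), which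
  identifies the coefficients of 2F1(1, g; 1+g; x), and n! \<le> (1+g)_n, which
  makes the Pfaff-side series converge absolutely.\<close>

lemma pochhammer_ratio:
  fixes g :: real assumes g: "g > 0"
  shows "pochhammer g n / pochhammer (1 + g) n = g / (g + n)"
proof -
  have "pochhammer g n * (g + n) = pochhammer g (Suc n)" by (rule pochhammer_Suc[symmetric])
  also have "\<dots> = g * pochhammer (1 + g) n" by (simp add: pochhammer_rec add.commute)
  finally have rec: "pochhammer g n * (g + n) = g * pochhammer (1 + g) n" .
  have "pochhammer (1 + g) n > 0" "g + n > 0" using g by (auto intro: pochhammer_pos)
  then show ?thesis using rec by (simp add: field_simps)
qed

lemma fact_le_pochhammer:
  fixes g :: real assumes g: "g > 0"
  shows "fact n \<le> pochhammer (1 + g) n"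
proof (induction n)
  case (Suc n)
  have "fact (Suc n) = fact n * (1 + real n)" by (simp add: algebra_simps)
  also have "\<dots> \<le> pochhammer (1 + g) n * (1 + g + real n)"
    using Suc g by (intro mult_mono) (auto intro: less_imp_le[OF pochhammer_pos])
  finally show ?case by (simp add: pochhammer_Suc)
qed simp

text \<open>Integrals of the form int_0^oo e^(-d t) (1 - e^(-l t))^n dt (a Beta integral after
  the substitution u = e^(-l t)); they are the coefficients in the Pfaff-side expansion.\<close>

context
  fixes d l :: real assumes d: "d > 0" and l: "l > 0"
begin

lemma beta_integrand_integrable:
  "set_integrable lborel {0..} (\<lambda>t. exp (-d*t) * (1 - exp (-l*t))^n)"
proof (rule set_integrable_bound[OF exp_integral(1)[OF d]])
  show "set_borel_measurable lborel {0..} (\<lambda>t. exp (-d*t) * (1 - exp (-l*t))^n)"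
    unfolding set_borel_measurable_def by measurable
  show "AE t in lborel. t \<in> {0..} \<longrightarrow>
      norm (exp (-d*t) * (1 - exp (-l*t))^n) \<le> norm (exp (-d*t))"
  proof (rule AE_I2, rule impI)
    fix t :: real assume "t \<in> {0..}"
    then have "\<bar>1 - exp (-l*t)\<bar>^n \<le> 1" using l by (intro power_le_one) auto
    then show "norm (exp (-d*t) * (1 - exp (-l*t))^n) \<le> norm (exp (-d*t))"
      by (simp add: abs_mult power_abs)
  qed
qed

text \<open>Integration by parts, in the form of the FTC for the primitive
  -e^(-d t) (1 - e^(-l t))^(n+1), gives the recursion for these integrals.\<close>

lemma beta_integral_rec:
  "(d + Suc n * l) * (LBINT t:{0..}. exp (-d*t) * (1 - exp (-l*t))^(Suc n))
     = Suc n * l * (LBINT t:{0..}. exp (-d*t) * (1 - exp (-l*t))^n)"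
proof -
  let ?g = "\<lambda>n t. exp (-d*t) * (1 - exp (-l*t))^n"
  let ?F = "\<lambda>t. - exp (-d*t) * (1 - exp (-l*t))^(Suc n)"
  let ?f = "\<lambda>t. (d + Suc n * l) * ?g (Suc n) t - Suc n * l * ?g n t"
  have deriv: "DERIV ?F x :> ?f x" for x
  proof -
    have "DERIV ?F x :> (d * exp (-d*x) * (1 - exp (-l*x))^(Suc n)
       - exp (-d*x) * (Suc n * (1 - exp (-l*x))^n * (l * exp (-l*x))))"
      by (rule derivative_eq_intros refl)+ simp
    moreover have "exp (-l*x) = 1 - (1 - exp (-l*x))" by simp
    then have "d * exp (-d*x) * (1 - exp (-l*x))^(Suc n)
       - exp (-d*x) * (Suc n * (1 - exp (-l*x))^n * (l * exp (-l*x))) = ?f x"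
      by (simp add: algebra_simps)
    ultimately show ?thesis by simp
  qed
  have int1: "set_integrable lborel {0..} (\<lambda>t. (d + Suc n * l) * ?g (Suc n) t)"
    and int2: "set_integrable lborel {0..} (\<lambda>t. Suc n * l * ?g n t)"
    by (intro set_integrable_mult_right beta_integrand_integrable)+
  have "(?F \<longlongrightarrow> ?F 0) (at_right 0)" by (intro tendsto_intros)
  then have at_0: "(?F \<longlongrightarrow> 0) (at_right 0)" by simp
  have "(?F \<longlongrightarrow> - 0 * (1 - 0)^(Suc n)) at_top"
    by (intro tendsto_intros exp_neg_at_top d l)
  then have at_infty: "(?F \<longlongrightarrow> 0) at_top" by simp
  have "(LBINT t:{0..}. ?f t) = - 0"
    by (rule FTC_Ici[OF deriv _ set_integral_diff(1)[OF int1 int2] at_0 at_infty])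
       (auto intro!: continuous_intros)
  moreover have "(LBINT t:{0..}. ?f t) = (d + Suc n * l) * (LBINT t:{0..}. ?g (Suc n) t)
      - Suc n * l * (LBINT t:{0..}. ?g n t)"
    by (simp only: set_integral_diff(2)[OF int1 int2] set_integral_mult_right)
  ultimately show ?thesis by linarith
qed

lemma beta_integral:
  "(LBINT t:{0..}. exp (-d*t) * (1 - exp (-l*t))^n) = fact n / (pochhammer (1 + d/l) n * d)"
proof (induction n)
  case 0
  then show ?case using exp_integral(2)[OF d] by simp
next
  case (Suc n)
  have poch_pos: "pochhammer (1 + d/l) n > 0"
    by (intro pochhammer_pos) (use d l in \<open>auto intro: add_pos_pos\<close>)
  have coeff_pos: "d + Suc n * l > 0" using d l by (simp add: add_pos_nonneg)
  have "(d + Suc n * l) * (LBINT t:{0..}. exp (-d*t) * (1 - exp (-l*t))^(Suc n))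
       = Suc n * l * (fact n / (pochhammer (1 + d/l) n * d))"
    using beta_integral_rec[of n] by (simp only: Suc.IH)
  then have "(LBINT t:{0..}. exp (-d*t) * (1 - exp (-l*t))^(Suc n))
       = Suc n * l * (fact n / (pochhammer (1 + d/l) n * d)) / (d + Suc n * l)"
    using coeff_pos by (intro eq_divide_imp) (simp_all add: mult.commute)
  also have "\<dots> = fact (Suc n) / (pochhammer (1 + d/l) (Suc n) * d)"
    using d l poch_pos by (simp add: pochhammer_Suc field_simps)
  finally show ?case .
qed

text \<open>The integral representation of 2F1(1, d/l; 1 + d/l; x), first inside the disc of
  convergence, expanding 1/(1 - x e^(-l t)) in powers of x e^(-l t).\<close>

lemma hyp2F1_integral_disc:
  assumes x: "\<bar>x\<bar> < 1"
  shows "(LBINT t:{0..}. d * exp (-d*t) / (1 - x * exp (-l*t))) = hyp2F1 1 (d/l) (1 + d/l) x"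
proof -
  define f where "f n t = d * exp (-d*t) * (x * exp (-l*t))^n" for n t
  have rate_pos: "d + n*l > 0" for n :: nat using d l by (simp add: add_pos_nonneg)
  have f_exp: "f n t = d * x^n * exp (- (d + n*l) * t)" for n t
    unfolding f_def by (simp add: power_mult_distrib exp_add[symmetric]
        exp_of_nat_mult[symmetric] algebra_simps)
  have ratio: "\<bar>x * exp (-l*t)\<bar> < 1" if "t \<ge> 0" for t
  proof -
    have "\<bar>x * exp (-l*t)\<bar> \<le> \<bar>x\<bar>" using that l by (simp add: abs_mult mult_left_le)
    then show ?thesis using x by simp
  qed
  have integrable: "set_integrable lborel {0..} (f n)" for n
    unfolding f_exp using exp_integral(1)[OF rate_pos[of n]] by (intro set_integrable_mult_right)
  have integral: "(LBINT t:{0..}. f n t) = (d/l) / (d/l + n) * x^n" for n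
    unfolding f_exp using exp_integral(2)[OF rate_pos[of n]] l by (simp add: field_simps)
  have abs_integral: "(LBINT t:{0..}. \<bar>f n t\<bar>) = d * \<bar>x\<bar>^n / (d + n*l)" for n
  proof -
    have "(LBINT t:{0..}. \<bar>f n t\<bar>) = (LBINT t:{0..}. (d * \<bar>x\<bar>^n) * exp (- (d + n*l) * t))"
      unfolding f_exp using d by (intro set_lebesgue_integral_cong) (auto simp: abs_mult power_abs)
    then show ?thesis using exp_integral(2)[OF rate_pos[of n]] by simp
  qed
  have abs_summable: "summable (\<lambda>n. \<bar>f n t\<bar>)" if "t \<ge> 0" for t
    unfolding f_def abs_mult power_abs
    by (intro summable_mult summable_geometric) (use ratio[OF that] in simp)
  have integrals_summable: "summable (\<lambda>n. LBINT t:{0..}. \<bar>f n t\<bar>)"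
  proof (rule summable_comparison_test'[where g="\<lambda>n. \<bar>x\<bar>^n"])
    show "summable (\<lambda>n. \<bar>x\<bar>^n)" using x by (intro summable_geometric) simp
    have "d / (d + n*l) * \<bar>x\<bar>^n \<le> \<bar>x\<bar>^n" for n :: nat
      using d l rate_pos[of n] by (intro mult_left_le_one_le) (auto simp: divide_le_eq)
    then show "norm (LBINT t:{0..}. \<bar>f n t\<bar>) \<le> \<bar>x\<bar>^n" for n
      unfolding abs_integral using d rate_pos[of n] by (simp add: abs_mult)
  qed
  have series: "(\<Sum>n. f n t) = d * exp (-d*t) / (1 - x * exp (-l*t))" if "t \<ge> 0" for t
    using sums_mult[OF geometric_sums, of "x * exp (-l*t)" "d * exp (-d*t)"] ratio[OF that]
    unfolding f_def by (simp add: sums_iff)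
  have "(\<lambda>n. (d/l) / (d/l + n) * x^n) sums (LBINT t:{0..}. (\<Sum>n. f n t))"
    using set_integral_sums[OF integrable abs_summable integrals_summable] integral by simp
  also have "(LBINT t:{0..}. (\<Sum>n. f n t)) = (LBINT t:{0..}. d * exp (-d*t) / (1 - x * exp (-l*t)))"
    using series by (intro set_lebesgue_integral_cong) auto
  finally have integral_sums: "(\<lambda>n. (d/l) / (d/l + n) * x^n)
      sums (LBINT t:{0..}. d * exp (-d*t) / (1 - x * exp (-l*t)))" .
  have "pochhammer 1 n * pochhammer (d/l) n / (pochhammer (1 + d/l) n * fact n) * x ^ n
      = (d/l) / (d/l + n) * x^n" for n
    using pochhammer_ratio[of "d/l" n] d l by (simp add: pochhammer_fact[symmetric] field_simps)
  then show ?thesis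
    using integral_sums x unfolding hyp2F1_def hyp2F1_series_def by (simp add: sums_iff)
qed

lemma pfaff_kernel_expansion:
  fixes x y :: real
  assumes x: "x \<le> -1" and y: "0 \<le> y" "y \<le> 1"
  defines "w \<equiv> x / (x - 1)"
  shows "(\<lambda>n. (w * (1 - y))^n / (1 - x)) sums (1 / (1 - x * y))"
proof -
  have w: "0 < w" "w < 1" using x by (auto simp: w_def field_simps)
  have "w * (1 - y) \<le> w" "0 \<le> w * (1 - y)" using w y by (simp_all add: mult_left_le)
  then have "\<bar>w * (1 - y)\<bar> < 1" using w(2) by linarith
  then have "(\<lambda>n. (w * (1 - y))^n) sums (1 / (1 - w * (1 - y)))"
    by (intro geometric_sums) simp
  from sums_divide[OF this, of "1 - x"]
  have "(\<lambda>n. (w * (1 - y))^n / (1 - x)) sums (1 / ((1 - x) * (1 - w * (1 - y))))"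
    by (simp add: mult.commute)
  moreover have "(1 - x) * (1 - w * (1 - y)) = 1 - x * y"
    using x unfolding w_def by (simp add: field_simps)
  ultimately show ?thesis by simp
qed

text \<open>For x \<le> -1, integrating Pfaff's expansion termwise with the Beta integrals yields
  the Pfaff-transformed series by which 2F1 is defined there.\<close>

lemma hyp2F1_integral_Pfaff:
  assumes x: "x \<le> -1"
  shows "(LBINT t:{0..}. d * exp (-d*t) / (1 - x * exp (-l*t))) = hyp2F1 1 (d/l) (1 + d/l) x"
proof -
  define w where "w = x / (x - 1)"
  have w0: "0 < w" and w1: "w < 1" and x1: "1 - x > 0" using x by (auto simp: w_def field_simps)
  define f where "f n t = d * exp (-d*t) * ((w * (1 - exp (-l*t)))^n / (1 - x))" for n t
  have poch_pos: "pochhammer (1 + d/l) n > 0" for n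
    using d l by (intro pochhammer_pos) (simp add: add_pos_pos)
  have f_beta: "f n t = d / (1 - x) * w^n * (exp (-d*t) * (1 - exp (-l*t))^n)" for n t
    unfolding f_def by (simp add: power_mult_distrib mult_ac)
  have integrable: "set_integrable lborel {0..} (f n)" for n
    unfolding f_beta by (intro set_integrable_mult_right beta_integrand_integrable)
  have nonneg: "f n t \<ge> 0" if "t \<ge> 0" for n t
    unfolding f_def using that l w0 x1 d by simp
  have pointwise: "(\<lambda>n. f n t) sums (d * exp (-d*t) / (1 - x * exp (-l*t)))" if "t \<ge> 0" for t
    using sums_mult[OF pfaff_kernel_expansion[OF x, of "exp (-l*t)"], of "d * exp (-d*t)"] that l
    unfolding f_def w_def by simp
  have integral: "(LBINT t:{0..}. f n t) = w^n / (1 - x) * (fact n / pochhammer (1 + d/l) n)" for n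
  proof -
    have "(LBINT t:{0..}. f n t) = d / (1 - x) * w^n * (fact n / (pochhammer (1 + d/l) n * d))"
      unfolding f_beta beta_integral[symmetric] by simp
    also have "\<dots> = w^n / (1 - x) * (fact n / pochhammer (1 + d/l) n)"
      using d x1 poch_pos[of n] by (simp add: field_simps)
    finally show ?thesis .
  qed
  have integrals_summable: "summable (\<lambda>n. LBINT t:{0..}. f n t)"
  proof (rule summable_comparison_test'[where g="\<lambda>n. w^n / (1 - x)"])
    show "summable (\<lambda>n. w^n / (1 - x))" using w0 w1 by (intro summable_divide summable_geometric) simp
    have "fact n / pochhammer (1 + d/l) n \<le> 1" for n
      using fact_le_pochhammer[of "d/l" n] poch_pos[of n] d l by simp
    then have "w^n / (1 - x) * (fact n / pochhammer (1 + d/l) n) \<le> w^n / (1 - x)" for n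
      using w0 x1 poch_pos[of n] by (intro mult_right_le_one_le) auto
    then show "norm (LBINT t:{0..}. f n t) \<le> w^n / (1 - x)" for n
      unfolding integral real_norm_def using w0 x1 poch_pos[of n] by (subst abs_of_nonneg) auto
  qed
  have "(\<lambda>n. w^n / (1 - x) * (fact n / pochhammer (1 + d/l) n))
      sums (LBINT t:{0..}. d * exp (-d*t) / (1 - x * exp (-l*t)))"
    using set_integral_sums_nonneg[OF integrable nonneg pointwise integrals_summable]
    unfolding integral .
  from sums_mult[OF this, of "1 - x"]
  have "(\<lambda>n. fact n / pochhammer (1 + d/l) n * w^n)
      sums ((1 - x) * (LBINT t:{0..}. d * exp (-d*t) / (1 - x * exp (-l*t))))"
    using x1 by (simp add: mult_ac)
  moreover have "pochhammer 1 n * pochhammer 1 n / (pochhammer (1 + d/l) n * fact n) * w ^ n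
      = fact n / pochhammer (1 + d/l) n * w^n" for n
    by (simp add: pochhammer_fact[symmetric])
  ultimately have "hyp2F1_series 1 1 (1 + d/l) w
      = (1 - x) * (LBINT t:{0..}. d * exp (-d*t) / (1 - x * exp (-l*t)))"
    unfolding hyp2F1_series_def by (simp add: sums_iff)
  then show ?thesis
    using x x1 unfolding hyp2F1_def w_def by (simp add: powr_neg_one)
qed

lemma hyp2F1_integral:
  assumes x: "x < 1"
  shows "(LBINT t:{0..}. d * exp (-d*t) / (1 - x * exp (-l*t))) = hyp2F1 1 (d/l) (1 + d/l) x"
  using hyp2F1_integral_disc hyp2F1_integral_Pfaff x by (cases "\<bar>x\<bar> < 1") auto

lemma hyp2F1_integrand_integrable:
  assumes x: "x < 1"
  shows "set_integrable lborel {0..} (\<lambda>t. d * exp (-d*t) / (1 - x * exp (-l*t)))"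
proof -
  define m where "m = min 1 (1 - x)"
  have m: "m > 0" using x by (simp add: m_def)
  have denom_ge: "1 - x * exp (-l*t) \<ge> m" if "t \<ge> 0" for t
  proof (cases "x \<ge> 0")
    case True
    have "x * exp (-l*t) \<le> x * 1" using True that l by (intro mult_left_mono) auto
    then show ?thesis by (simp add: m_def)
  next
    case False
    then have "x * exp (-l*t) \<le> 0" by (simp add: mult_nonpos_nonneg)
    then show ?thesis by (simp add: m_def)
  qed
  show ?thesis
  proof (rule set_integrable_bound[where f="\<lambda>t. (d / m) * exp (-d*t)"])
    show "set_integrable lborel {0..} (\<lambda>t. (d / m) * exp (-d*t))"
      using exp_integral(1)[OF d] by (intro set_integrable_mult_right)
    show "set_borel_measurable lborel {0..} (\<lambda>t. d * exp (-d*t) / (1 - x * exp (-l*t)))"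
      unfolding set_borel_measurable_def by measurable
    show "AE t in lborel. t \<in> {0..} \<longrightarrow>
        norm (d * exp (-d*t) / (1 - x * exp (-l*t))) \<le> norm ((d / m) * exp (-d*t))"
    proof (rule AE_I2, rule impI)
      fix t :: real assume "t \<in> {0..}"
      then have denom: "1 - x * exp (-l*t) \<ge> m" using denom_ge by auto
      then have "d * exp (-d*t) / (1 - x * exp (-l*t)) \<le> d * exp (-d*t) / m"
        using m d by (intro divide_left_mono) auto
      then show "norm (d * exp (-d*t) / (1 - x * exp (-l*t))) \<le> norm ((d / m) * exp (-d*t))"
        using denom m d by simp
    qed
  qed
qed

end

lemma xi_less_1:
  fixes q z :: real assumes "q < 1" "0 \<le> z" "z < 1"
  shows "xi q z < 1"
  using assms unfolding xi_def by (simp add: divide_less_eq)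

text \<open>Since phi_t(z) = 1 - (1 - q)/(1 - xi(z) e^(-lambda t)) and
  xi(z) < 1, this is the hypergeometric integral above.\<close>

lemma bd_pgf_mixture:
  fixes \<alpha> \<beta> \<delta> z :: real
  assumes \<delta>: "\<delta> > 0" and \<beta>: "\<beta> \<ge> 0" and \<alpha>: "\<alpha> > \<beta>" and z: "0 \<le> z" "z < 1"
  shows "set_integrable lborel {0..} (\<lambda>t. bd_pgf \<alpha> \<beta> t z * (\<delta> * exp (-\<delta> * t)))"
    and "(LBINT t:{0..}. bd_pgf \<alpha> \<beta> t z * (\<delta> * exp (-\<delta> * t)))
       = 1 - (1 - \<beta>/\<alpha>) * hyp2F1 1 (\<delta>/(\<alpha>-\<beta>)) (1 + \<delta>/(\<alpha>-\<beta>)) (xi (\<beta>/\<alpha>) z)"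
    and "(LBINT t:{0..}. (bd_pgf \<alpha> \<beta> t z - 1) * (\<delta> * exp (-\<delta> * t)))
       = - (1 - \<beta>/\<alpha>) * hyp2F1 1 (\<delta>/(\<alpha>-\<beta>)) (1 + \<delta>/(\<alpha>-\<beta>)) (xi (\<beta>/\<alpha>) z)"
proof -
  have l: "\<alpha> - \<beta> > 0" using \<alpha> by simp
  define x where "x = xi (\<beta>/\<alpha>) z"
  have x: "x < 1" unfolding x_def using \<alpha> \<beta> z by (intro xi_less_1) (auto simp: divide_less_eq)
  have split: "bd_pgf \<alpha> \<beta> t z * (\<delta> * exp (-\<delta> * t)) =
     \<delta> * exp (-\<delta> * t) - (1 - \<beta>/\<alpha>) * (\<delta> * exp (-\<delta>*t) / (1 - x * exp (-(\<alpha>-\<beta>)*t)))" for t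
    unfolding bd_pgf_def x_def by (simp add: algebra_simps)
  note density = exp_density_integral[OF \<delta>]
  have hyp: "set_integrable lborel {0..}
      (\<lambda>t. (1 - \<beta>/\<alpha>) * (\<delta> * exp (-\<delta>*t) / (1 - x * exp (-(\<alpha>-\<beta>)*t))))"
    using hyp2F1_integrand_integrable[OF \<delta> l x] by (intro set_integrable_mult_right)
  show integrable: "set_integrable lborel {0..} (\<lambda>t. bd_pgf \<alpha> \<beta> t z * (\<delta> * exp (-\<delta> * t)))"
    unfolding split by (rule set_integral_diff(1)[OF density(1) hyp])
  have "(LBINT t:{0..}. bd_pgf \<alpha> \<beta> t z * (\<delta> * exp (-\<delta> * t)))
     = 1 - (1 - \<beta>/\<alpha>) * (LBINT t:{0..}. \<delta> * exp (-\<delta>*t) / (1 - x * exp (-(\<alpha>-\<beta>)*t)))"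
    unfolding split set_integral_diff(2)[OF density(1) hyp] density(2)
    by (simp only: set_integral_mult_right)
  then show mixture: "(LBINT t:{0..}. bd_pgf \<alpha> \<beta> t z * (\<delta> * exp (-\<delta> * t)))
       = 1 - (1 - \<beta>/\<alpha>) * hyp2F1 1 (\<delta>/(\<alpha>-\<beta>)) (1 + \<delta>/(\<alpha>-\<beta>)) (xi (\<beta>/\<alpha>) z)"
    using hyp2F1_integral[OF \<delta> l x] unfolding x_def by simp
  have "(LBINT t:{0..}. (bd_pgf \<alpha> \<beta> t z - 1) * (\<delta> * exp (-\<delta> * t)))
      = (LBINT t:{0..}. bd_pgf \<alpha> \<beta> t z * (\<delta> * exp (-\<delta> * t)) - \<delta> * exp (-\<delta> * t))"
    by (simp add: left_diff_distrib)
  also have "\<dots> = (LBINT t:{0..}. bd_pgf \<alpha> \<beta> t z * (\<delta> * exp (-\<delta> * t))) - 1"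
    by (simp only: set_integral_diff(2)[OF integrable density(1)] density(2))
  finally show "(LBINT t:{0..}. (bd_pgf \<alpha> \<beta> t z - 1) * (\<delta> * exp (-\<delta> * t)))
       = - (1 - \<beta>/\<alpha>) * hyp2F1 1 (\<delta>/(\<alpha>-\<beta>)) (1 + \<delta>/(\<alpha>-\<beta>)) (xi (\<beta>/\<alpha>) z)"
    unfolding mixture by (simp add: algebra_simps)
qed

context
  fixes \<alpha> \<beta> :: real assumes \<alpha>: "\<alpha> > \<beta>" and \<beta>: "\<beta> \<ge> 0"
begin

lemma kendall_params:
  assumes s: "s \<ge> 0"
  defines "E \<equiv> exp ((\<alpha> - \<beta>) * s)"
  shows "E \<ge> 1"
    "0 \<le> \<beta> * (E - 1) / (\<alpha> * E - \<beta>)" "\<beta> * (E - 1) / (\<alpha> * E - \<beta>) < 1"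
    "0 \<le> \<alpha> * (E - 1) / (\<alpha> * E - \<beta>)" "\<alpha> * (E - 1) / (\<alpha> * E - \<beta>) < 1"
proof -
  have a0: "\<alpha> > 0" using \<alpha> \<beta> by simp
  show E1: "E \<ge> 1" unfolding E_def using s \<alpha> by simp
  have "\<alpha> * E \<ge> \<alpha>" using E1 a0 by simp
  then have denom: "\<alpha> * E - \<beta> > 0" using \<alpha> by simp
  show "0 \<le> \<beta> * (E - 1) / (\<alpha> * E - \<beta>)" "0 \<le> \<alpha> * (E - 1) / (\<alpha> * E - \<beta>)"
    using denom E1 \<beta> a0 by simp_all
  have "\<beta> * E < \<alpha> * E" using \<alpha> E1 by simp
  then show "\<beta> * (E - 1) / (\<alpha> * E - \<beta>) < 1" using denom by (simp add: algebra_simps)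
  show "\<alpha> * (E - 1) / (\<alpha> * E - \<beta>) < 1" using denom \<alpha> by (simp add: algebra_simps)
qed

lemma bd_prob_eq:
  defines "E \<equiv> \<lambda>s. exp ((\<alpha> - \<beta>) * s)"
  defines "a \<equiv> \<lambda>s. \<beta> * (E s - 1) / (\<alpha> * E s - \<beta>)" and "b \<equiv> \<lambda>s. \<alpha> * (E s - 1) / (\<alpha> * E s - \<beta>)"
  shows "bd_prob \<alpha> \<beta> s n = (if n = 0 then a s else (1 - a s) * (1 - b s) * b s ^ (n - 1))"
  unfolding bd_prob_def Let_def E_def a_def b_def ..

lemma bd_prob_bounds:
  assumes s: "s \<ge> 0"
  shows "0 \<le> bd_prob \<alpha> \<beta> s n" "bd_prob \<alpha> \<beta> s n \<le> 1"
proof -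
  note ab = kendall_params[OF s]
  have "b ^ (n - 1) \<le> 1" if "0 \<le> b" "b < 1" for b :: real
    using that by (intro power_le_one) auto
  then show "0 \<le> bd_prob \<alpha> \<beta> s n" "bd_prob \<alpha> \<beta> s n \<le> 1"
    unfolding bd_prob_eq using ab by (auto intro!: mult_le_one)
qed

text \<open>The rational identity behind the generating function of Kendall's law:
  a + (1-a)(1-b) z/(1 - b z) = 1 - (1 - q)/(1 - xi(z)/E).\<close>

lemma kendall_pgf_identity:
  fixes E z :: real
  assumes E: "E \<ge> 1" and z: "0 \<le> z" "z < 1"
  shows "\<beta> * (E - 1) / (\<alpha> * E - \<beta>) + (1 - \<beta> * (E - 1) / (\<alpha> * E - \<beta>))
        * (1 - \<alpha> * (E - 1) / (\<alpha> * E - \<beta>)) * z / (1 - \<alpha> * (E - 1) / (\<alpha> * E - \<beta>) * z)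
    = 1 - (1 - \<beta>/\<alpha>) / (1 - ((\<beta>/\<alpha> - z) / (1 - z)) * (1 / E))"
proof -
  define D where "D = \<alpha> * E - \<beta>"
  define Q where "Q = D - \<alpha> * (E - 1) * z"
  have a0: "\<alpha> > 0" using \<alpha> \<beta> by simp
  have D: "D > 0" unfolding D_def using \<alpha> E a0 by (smt (verit) mult_le_cancel_left1)
  have "\<alpha> * (E - 1) * z \<le> \<alpha> * (E - 1)" using z E a0 by (simp add: mult_left_le)
  then have Q: "Q > 0" using \<alpha> unfolding Q_def D_def by (simp add: algebra_simps)
  have poly: "\<beta> * (E - 1) * Q + (\<alpha> - \<beta>)^2 * E * z = D * (Q - (\<alpha> - \<beta>) * E * (1 - z))"
    unfolding Q_def D_def by (simp add: algebra_simps power2_eq_square)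
  have lhs: "1 - \<beta> * (E - 1) / D = (\<alpha> - \<beta>) * E / D"
    "1 - \<alpha> * (E - 1) / D = (\<alpha> - \<beta>) / D"
    "1 - \<alpha> * (E - 1) / D * z = Q / D"
    using D unfolding Q_def by (auto simp: field_simps D_def)
  have "1 - ((\<beta>/\<alpha> - z) / (1 - z)) * (1 / E) = Q / (\<alpha> * E * (1 - z))"
    using a0 E z unfolding Q_def D_def by (simp add: field_simps)
  then have rhs: "1 - (1 - \<beta>/\<alpha>) / (1 - ((\<beta>/\<alpha> - z) / (1 - z)) * (1 / E))
      = 1 - (\<alpha> - \<beta>) * E * (1 - z) / Q"
    using a0 E z Q by (simp add: field_simps)
  have "\<beta> * (E - 1) / D + (\<alpha> - \<beta>) * E / D * ((\<alpha> - \<beta>) / D) * z / (Q / D)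
      = (\<beta> * (E - 1) * Q + (\<alpha> - \<beta>)^2 * E * z) / (D * Q)"
    using D Q by (simp add: field_simps power2_eq_square)
  also have "\<dots> = 1 - (\<alpha> - \<beta>) * E * (1 - z) / Q"
    unfolding poly using D Q by (simp add: field_simps)
  finally show ?thesis unfolding D_def[symmetric] lhs rhs .
qed

lemma bd_prob_pgf:
  assumes s: "s \<ge> 0" and z: "0 \<le> z" "z < 1"
  shows "(\<lambda>n. bd_prob \<alpha> \<beta> s n * z^n) sums bd_pgf \<alpha> \<beta> s z"
proof -
  define E where "E = exp ((\<alpha> - \<beta>) * s)"
  define a where "a = \<beta> * (E - 1) / (\<alpha> * E - \<beta>)"
  define b where "b = \<alpha> * (E - 1) / (\<alpha> * E - \<beta>)"
  note ab = kendall_params[OF s, folded E_def, folded a_def b_def]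
  have prob: "bd_prob \<alpha> \<beta> s n = (if n = 0 then a else (1 - a) * (1 - b) * b ^ (n - 1))" for n
    unfolding bd_prob_eq E_def a_def b_def ..
  have "b * z \<le> b" using ab z by (simp add: mult_left_le)
  then have "(\<lambda>n. (b * z)^n) sums (1 / (1 - b * z))"
    by (intro geometric_sums) (use ab z in simp)
  from sums_mult[OF this, of "(1 - a) * (1 - b) * z"]
  have "(\<lambda>n. bd_prob \<alpha> \<beta> s (Suc n) * z^(Suc n)) sums ((1 - a) * (1 - b) * z / (1 - b * z))"
    unfolding prob by (simp add: power_mult_distrib mult_ac)
  then have "(\<lambda>n. bd_prob \<alpha> \<beta> s n * z^n) sums (a + (1 - a) * (1 - b) * z / (1 - b * z))"
    by (subst (asm) sums_Suc_iff) (simp add: prob add.commute)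
  moreover have "exp (-(\<alpha> - \<beta>) * s) = 1 / E"
    unfolding E_def by (metis exp_minus inverse_eq_divide mult_minus_left)
  ultimately show ?thesis
    using kendall_pgf_identity[OF ab(1) z] unfolding bd_pgf_def xi_def a_def b_def by simp
qed

end

text \<open>The law of Y = Z_X has generating function E phi_X(z): integrate the series of
  bd_prob termwise against the Exp(delta) density.\<close>

lemma Y_prob_pgf:
  assumes \<alpha>: "\<alpha> > \<beta>" and \<beta>: "\<beta> \<ge> 0" and \<delta>: "\<delta> > 0" and z: "0 \<le> z" "z < 1"
    and summable: "summable (\<lambda>n. Y_prob \<alpha> \<beta> \<delta> n)"
  shows "(\<lambda>n. Y_prob \<alpha> \<beta> \<delta> n * z^n) sums (LBINT s:{0..}. bd_pgf \<alpha> \<beta> s z * (\<delta> * exp (-\<delta> * s)))"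
proof -
  define f where "f n s = z^n * (\<delta> * exp (-\<delta> * s) * bd_prob \<alpha> \<beta> s n)" for n s
  note bounds = bd_prob_bounds[OF \<alpha> \<beta>]
  have nonneg: "f n s \<ge> 0" if "s \<ge> 0" for n s
    unfolding f_def using bounds[OF that] z \<delta> by simp
  have "set_integrable lborel {0..} (\<lambda>s. \<delta> * exp (-\<delta> * s) * bd_prob \<alpha> \<beta> s n)" for n
  proof (rule set_integrable_bound[OF exp_density_integral(1)[OF \<delta>]])
    show "set_borel_measurable lborel {0..} (\<lambda>s. \<delta> * exp (-\<delta> * s) * bd_prob \<alpha> \<beta> s n)"
      unfolding set_borel_measurable_def bd_prob_def Let_def by measurable
    show "AE t in lborel. t \<in> {0..} \<longrightarrow>
        norm (\<delta> * exp (-\<delta> * t) * bd_prob \<alpha> \<beta> t n) \<le> norm (\<delta> * exp (-\<delta> * t))"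
      using bounds \<delta> by (intro AE_I2) (auto simp: abs_mult mult_left_le)
  qed
  then have integrable: "set_integrable lborel {0..} (f n)" for n
    unfolding f_def by (intro set_integrable_mult_right)
  have integral: "(LBINT s:{0..}. f n s) = Y_prob \<alpha> \<beta> \<delta> n * z^n" for n
    unfolding f_def Y_prob_def by (simp add: mult.commute)
  have pointwise: "(\<lambda>n. f n s) sums (bd_pgf \<alpha> \<beta> s z * (\<delta> * exp (-\<delta> * s)))" if "s \<ge> 0" for s
    using sums_mult[OF bd_prob_pgf[OF \<alpha> \<beta> that z], of "\<delta> * exp (-\<delta> * s)"]
    unfolding f_def by (simp add: mult_ac)
  have "norm (Y_prob \<alpha> \<beta> \<delta> n * z^n) \<le> Y_prob \<alpha> \<beta> \<delta> n" for n
  proof -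
    have "0 \<le> Y_prob \<alpha> \<beta> \<delta> n"
      unfolding Y_prob_def set_lebesgue_integral_def using bounds \<delta>
      by (intro Bochner_Integration.integral_nonneg) (simp add: indicator_def)
    moreover have "z^n \<le> 1" using z by (intro power_le_one) auto
    ultimately show ?thesis using z by (simp add: abs_mult mult_left_le)
  qed
  then have "summable (\<lambda>n. LBINT s:{0..}. f n s)"
    unfolding integral by (rule summable_comparison_test'[OF summable])
  from set_integral_sums_nonneg[OF integrable nonneg pointwise this]
  show ?thesis unfolding integral .
qed

context prob_space
begin

lemma nat_rv_event:
  assumes X: "X \<in> measurable M (count_space UNIV)"
  shows "{\<omega>\<in>space M. X \<omega> = n} \<in> events"
proof -
  have "{\<omega>\<in>space M. X \<omega> = n} = X -` {n} \<inter> space M" by auto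
  then show ?thesis using measurable_sets[OF X, of "{n}"] by simp
qed

lemma nat_rv_prob_sums:
  fixes X :: "'a \<Rightarrow> nat"
  assumes X: "X \<in> measurable M (count_space UNIV)"
  shows "(\<lambda>n. prob {\<omega>\<in>space M. X \<omega> = n}) sums 1"
proof -
  have "(\<lambda>n. prob {\<omega>\<in>space M. X \<omega> = n}) sums prob (\<Union>n. {\<omega>\<in>space M. X \<omega> = n})"
    using nat_rv_event[OF X] by (intro finite_measure_UNION) (auto simp: disjoint_family_on_def)
  moreover have "(\<Union>n. {\<omega>\<in>space M. X \<omega> = n}) = space M" by auto
  ultimately show ?thesis using prob_space by simp
qed

lemma expectation_sums_nonneg:
  fixes f :: "nat \<Rightarrow> 'a \<Rightarrow> real"
  assumes integrable: "\<And>n. integrable M (f n)"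
    and nonneg: "\<And>n \<omega>. \<omega> \<in> space M \<Longrightarrow> f n \<omega> \<ge> 0"
    and pointwise: "\<And>\<omega>. \<omega> \<in> space M \<Longrightarrow> (\<lambda>n. f n \<omega>) sums g \<omega>"
    and summable: "summable (\<lambda>n. expectation (f n))"
  shows "(\<lambda>n. expectation (f n)) sums expectation g"
proof -
  have "(\<integral>\<omega>. norm (f n \<omega>) \<partial>M) = expectation (f n)" for n
    using nonneg by (intro Bochner_Integration.integral_cong) auto
  then have "(\<lambda>n. expectation (f n)) sums (\<integral>\<omega>. (\<Sum>n. f n \<omega>) \<partial>M)"
    using nonneg pointwise summable
    by (intro sums_integral[OF integrable]) (auto intro!: AE_I2 simp: sums_iff)
  also have "(\<integral>\<omega>. (\<Sum>n. f n \<omega>) \<partial>M) = expectation g"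
    using pointwise by (intro Bochner_Integration.integral_cong) (auto simp: sums_iff)
  finally show ?thesis .
qed

lemma nat_rv_pgf:
  assumes X: "X \<in> measurable M (count_space UNIV)" and z: "0 \<le> z" "z \<le> (1::real)"
  shows "(\<lambda>n. prob {\<omega>\<in>space M. X \<omega> = n} * z^n) sums expectation (\<lambda>\<omega>. z ^ X \<omega>)"
proof -
  define f where "f n \<omega> = z^n * indicator {\<omega>\<in>space M. X \<omega> = n} \<omega>" for n \<omega>
  have integrable: "integrable M (f n)" for n
    unfolding f_def using nat_rv_event[OF X]
    by (intro integrable_mult_right integrable_real_indicator) (auto simp: less_top[symmetric])
  have nonneg: "f n \<omega> \<ge> 0" for n \<omega> unfolding f_def using z by simp
  have integral: "expectation (f n) = prob {\<omega>\<in>space M. X \<omega> = n} * z^n" for n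
  proof -
    have "{\<omega>\<in>space M. X \<omega> = n} \<inter> space M = {\<omega>\<in>space M. X \<omega> = n}" by auto
    then show ?thesis unfolding f_def by simp
  qed
  have pointwise: "(\<lambda>n. f n \<omega>) sums (z ^ X \<omega>)" if "\<omega> \<in> space M" for \<omega>
  proof -
    have "f n \<omega> = (if n = X \<omega> then z ^ n else 0)" for n
      unfolding f_def using that by (auto simp: indicator_def)
    then show ?thesis using sums_single[of "X \<omega>" "\<lambda>n. z ^ n"] by simp
  qed
  have "norm (prob {\<omega>\<in>space M. X \<omega> = n} * z^n) \<le> prob {\<omega>\<in>space M. X \<omega> = n}" for n
  proof -
    have "z^n \<le> 1" using z by (intro power_le_one) auto
    then show ?thesis using z by (simp add: abs_mult mult_left_le)
  qed
  then have "summable (\<lambda>n. expectation (f n))"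
    unfolding integral by (rule summable_comparison_test'[OF sums_summable[OF nat_rv_prob_sums[OF X]]])
  from expectation_sums_nonneg[OF integrable nonneg pointwise this]
  show ?thesis unfolding integral .
qed

text \<open>For 0 \<le> z \<le> 1, z^X is integrable with expectation in [0, 1], positive when z > 0;
  positivity lets us take logarithms of the generating function of V.\<close>

lemma nat_rv_power_integrable:
  assumes X: "X \<in> measurable M (count_space UNIV)" and z: "0 \<le> z" "z \<le> (1::real)"
  shows "integrable M (\<lambda>\<omega>. z ^ X \<omega>)"
    and "0 \<le> expectation (\<lambda>\<omega>. z ^ X \<omega>)" "expectation (\<lambda>\<omega>. z ^ X \<omega>) \<le> 1"
proof -
  have bounded: "AE \<omega> in M. z ^ X \<omega> \<le> 1" using z by (intro AE_I2 power_le_one)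
  show integrable: "integrable M (\<lambda>\<omega>. z ^ X \<omega>)"
    using X z bounded by (intro integrable_const_bound[where B=1]) auto
  show "0 \<le> expectation (\<lambda>\<omega>. z ^ X \<omega>)" using z by simp
  show "expectation (\<lambda>\<omega>. z ^ X \<omega>) \<le> 1" by (rule integral_le_const[OF integrable bounded])
qed

lemma nat_rv_pgf_pos:
  assumes X: "X \<in> measurable M (count_space UNIV)" and z: "0 < z" "z \<le> (1::real)"
  shows "expectation (\<lambda>\<omega>. z ^ X \<omega>) > 0"
  using nat_rv_power_integrable[OF X] z by (intro expectation_greater) auto

text \<open>For K independent of Y_1, Y_2, ... (all valued in the naturals), with
  E z^(Y_i) = G for every i, the event {K = k} contributes P(K = k) G^k to the generating
  function of the random sum: independence factorises the expectation of the product
  1{K = k} z^(Y_1) ... z^(Y_k).\<close>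

lemma compound_term_expectation:
  fixes K :: "'a \<Rightarrow> nat" and Y :: "nat \<Rightarrow> 'a \<Rightarrow> nat" and z G :: real and k :: nat
  assumes K: "K \<in> measurable M (count_space UNIV)"
    and Y: "\<And>i. Y i \<in> measurable M (count_space UNIV)"
    and indep: "indep_vars (\<lambda>_. count_space UNIV) (\<lambda>j. case j of None \<Rightarrow> K | Some i \<Rightarrow> Y i) UNIV"
    and z: "0 \<le> z" "z \<le> 1"
    and G: "\<And>i. expectation (\<lambda>\<omega>. z ^ Y i \<omega>) = G"
  defines "f \<equiv> \<lambda>\<omega>. indicator {\<omega>\<in>space M. K \<omega> = k} \<omega> * (\<Prod>i\<in>{1..k}. z ^ Y i \<omega>)"
  shows "integrable M f" "expectation f = prob {\<omega>\<in>space M. K \<omega> = k} * G^k"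
proof -
  let ?X = "\<lambda>j. case j of None \<Rightarrow> K | Some i \<Rightarrow> Y i"
  define W where "W j n = (case j of None \<Rightarrow> indicator {k} n | Some i \<Rightarrow> z ^ n)"
    for j :: "nat option" and n :: nat
  define J where "J = insert None (Some ` {1..k})"
  have finite: "finite J" by (simp add: J_def)
  have indep_W: "indep_vars (\<lambda>_. borel) (\<lambda>j \<omega>. W j (?X j \<omega>)) J"
    by (rule indep_vars_compose2[OF indep_vars_subset[OF indep]]) auto
  have integrable_W: "integrable M (\<lambda>\<omega>. W j (?X j \<omega>))" for j
  proof (rule integrable_const_bound[where B=1])
    show "AE \<omega> in M. norm (W j (?X j \<omega>)) \<le> 1"
      unfolding W_def using z by (intro AE_I2) (cases j, auto intro: power_le_one)
  qed (use K Y in \<open>cases j; auto\<close>)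
  have prod_W: "(\<Prod>j\<in>J. W j (?X j \<omega>)) = f \<omega>" if "\<omega> \<in> space M" for \<omega>
  proof -
    have "(\<Prod>j\<in>Some ` {1..k}. W j (?X j \<omega>)) = (\<Prod>i\<in>{1..k}. z ^ Y i \<omega>)"
      by (subst prod.reindex) (auto simp: W_def)
    then show ?thesis
      unfolding J_def f_def using that by (subst prod.insert) (auto simp: W_def indicator_def)
  qed
  have "integrable M (\<lambda>\<omega>. \<Prod>j\<in>J. W j (?X j \<omega>)) = integrable M f"
    by (rule Bochner_Integration.integrable_cong[OF refl]) (rule prod_W)
  then show "integrable M f"
    using indep_vars_integrable[OF finite indep_W integrable_W] by simp
  have "expectation f = expectation (\<lambda>\<omega>. \<Prod>j\<in>J. W j (?X j \<omega>))"
    by (intro Bochner_Integration.integral_cong) (simp_all add: prod_W)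
  also have "\<dots> = (\<Prod>j\<in>J. expectation (\<lambda>\<omega>. W j (?X j \<omega>)))"
    by (rule indep_vars_lebesgue_integral[OF finite indep_W integrable_W])
  also have "\<dots> = expectation (indicator {\<omega>\<in>space M. K \<omega> = k}) * G^k"
  proof -
    have "expectation (\<lambda>\<omega>. W None (K \<omega>)) = expectation (indicator {\<omega>\<in>space M. K \<omega> = k})"
      by (intro Bochner_Integration.integral_cong) (simp_all add: W_def indicator_def)
    moreover have "(\<Prod>j\<in>Some ` {1..k}. expectation (\<lambda>\<omega>. W j (?X j \<omega>))) = G^k"
      by (subst prod.reindex) (auto simp: W_def G)
    ultimately show ?thesis unfolding J_def by (subst prod.insert) auto
  qed
  also have "expectation (indicator {\<omega>\<in>space M. K \<omega> = k}) = prob {\<omega>\<in>space M. K \<omega> = k}"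
    using nat_rv_event[OF K, of k] by (simp add: Int_absorb2)
  finally show "expectation f = prob {\<omega>\<in>space M. K \<omega> = k} * G^k" .
qed

lemma compound_pgf:
  fixes K :: "'a \<Rightarrow> nat" and Y :: "nat \<Rightarrow> 'a \<Rightarrow> nat" and z G :: real
  assumes K: "K \<in> measurable M (count_space UNIV)"
    and Y: "\<And>i. Y i \<in> measurable M (count_space UNIV)"
    and indep: "indep_vars (\<lambda>_. count_space UNIV) (\<lambda>j. case j of None \<Rightarrow> K | Some i \<Rightarrow> Y i) UNIV"
    and z: "0 \<le> z" "z \<le> 1"
    and G: "\<And>i. expectation (\<lambda>\<omega>. z ^ Y i \<omega>) = G"
  shows "(\<lambda>k. prob {\<omega>\<in>space M. K \<omega> = k} * G^k) sums
      expectation (\<lambda>\<omega>. z ^ (\<Sum>i\<in>{1..K \<omega>}. Y i \<omega>))"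
proof -
  define f where "f k \<omega> = indicator {\<omega>\<in>space M. K \<omega> = k} \<omega> * (\<Prod>i\<in>{1..k}. z ^ Y i \<omega>)"
    for k \<omega>
  note contribution = compound_term_expectation[OF K Y indep z G, folded f_def]
  have nonneg: "f k \<omega> \<ge> 0" for k \<omega> unfolding f_def using z by (simp add: prod_nonneg)
  have pointwise: "(\<lambda>k. f k \<omega>) sums (z ^ (\<Sum>i\<in>{1..K \<omega>}. Y i \<omega>))" if "\<omega> \<in> space M" for \<omega>
  proof -
    have "f k \<omega> = (if k = K \<omega> then (\<Prod>i\<in>{1..k}. z ^ Y i \<omega>) else 0)" for k
      unfolding f_def using that by (auto simp: indicator_def)
    then show ?thesis
      using sums_single[of "K \<omega>" "\<lambda>k. \<Prod>i\<in>{1..k}. z ^ Y i \<omega>"] by (simp add: power_sum)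
  qed
  have "0 \<le> G" "G \<le> 1"
    using nat_rv_power_integrable[OF Y z] G by auto
  then have "norm (prob {\<omega>\<in>space M. K \<omega> = k} * G^k) \<le> prob {\<omega>\<in>space M. K \<omega> = k}" for k
    by (simp add: abs_mult mult_left_le power_le_one)
  then have "summable (\<lambda>k. expectation (f k))"
    unfolding contribution(2) by (rule summable_comparison_test'[OF sums_summable[OF nat_rv_prob_sums[OF K]]])
  from expectation_sums_nonneg[OF contribution(1) nonneg pointwise this]
  show ?thesis unfolding contribution(2) .
qed

lemma compound_poisson_pgf:
  fixes K :: "'a \<Rightarrow> nat" and Y :: "nat \<Rightarrow> 'a \<Rightarrow> nat" and z G \<mu> :: real
  assumes K: "K \<in> measurable M (count_space UNIV)"
    and Y: "\<And>i. Y i \<in> measurable M (count_space UNIV)"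
    and indep: "indep_vars (\<lambda>_. count_space UNIV) (\<lambda>j. case j of None \<Rightarrow> K | Some i \<Rightarrow> Y i) UNIV"
    and z: "0 \<le> z" "z \<le> 1"
    and G: "\<And>i. expectation (\<lambda>\<omega>. z ^ Y i \<omega>) = G"
    and poisson: "\<And>k. prob {\<omega>\<in>space M. K \<omega> = k} = \<mu> ^ k / fact k * exp (- \<mu>)"
  shows "expectation (\<lambda>\<omega>. z ^ (\<Sum>i\<in>{1..K \<omega>}. Y i \<omega>)) = exp (- \<mu> * (1 - G))"
proof -
  have "(\<lambda>k. exp (-\<mu>) * ((\<mu> * G)^k /\<^sub>R fact k)) sums (exp (-\<mu>) * exp (\<mu> * G))"
    by (rule sums_mult[OF exp_converges])
  moreover have "exp (-\<mu>) * ((\<mu> * G)^k /\<^sub>R fact k) = prob {\<omega>\<in>space M. K \<omega> = k} * G^k" for k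
    unfolding poisson by (simp add: power_mult_distrib field_simps)
  moreover have "exp (-\<mu>) * exp (\<mu> * G) = exp (- \<mu> * (1 - G))"
    by (simp add: exp_add[symmetric] algebra_simps)
  ultimately show ?thesis
    using compound_pgf[OF K Y indep z G] sums_unique2 by simp
qed

lemma Y_prob_law_pgf:
  assumes \<alpha>: "\<alpha> > \<beta>" and \<beta>: "\<beta> \<ge> 0" and \<delta>: "\<delta> > 0" and z: "0 \<le> z" "z < 1"
    and Y: "Y \<in> measurable M (count_space UNIV)"
    and law: "\<And>n. prob {\<omega>\<in>space M. Y \<omega> = n} = Y_prob \<alpha> \<beta> \<delta> n"
  shows "expectation (\<lambda>\<omega>. z ^ Y \<omega>) = (LBINT t:{0..}. bd_pgf \<alpha> \<beta> t z * (\<delta> * exp (-\<delta> * t)))"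
proof -
  have summable: "summable (\<lambda>n. Y_prob \<alpha> \<beta> \<delta> n)"
    using sums_summable[OF nat_rv_prob_sums[OF Y]] unfolding law .
  have "(\<lambda>n. Y_prob \<alpha> \<beta> \<delta> n * z^n) sums expectation (\<lambda>\<omega>. z ^ Y \<omega>)"
    using nat_rv_pgf[OF Y, of z] z unfolding law by simp
  from sums_unique2[OF this Y_prob_pgf[OF \<alpha> \<beta> \<delta> z summable]] show ?thesis .
qed

end

text \<open>Uniqueness of generating functions: a bounded coefficient sequence whose power series
  vanishes on (0, 1) is zero (by continuity at 0 of the shifted series, inductively).\<close>

lemma powser_coeffs_zero:
  fixes c :: "nat \<Rightarrow> real"
  assumes bounded: "\<And>n. \<bar>c n\<bar> \<le> B"
    and vanishes: "\<And>z. 0 < z \<Longrightarrow> z < 1 \<Longrightarrow> (\<lambda>n. c n * z^n) sums 0"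
  shows "c m = 0"
proof (induction m rule: less_induct)
  case (less m)
  define g where "g x = (\<Sum>n. c (n + m) * x^n)" for x :: real
  have B: "B \<ge> 0" using bounded[of 0] by simp
  have "summable (\<lambda>n. c (n + m) * (1/2)^n)"
  proof (rule summable_comparison_test'[where g="\<lambda>n. B * (1/2)^n"])
    show "summable (\<lambda>n. B * (1/2::real)^n)" by (intro summable_mult summable_geometric) simp
    show "norm (c (n + m) * (1/2)^n) \<le> B * (1/2)^n" for n
      using bounded[of "n+m"] by (simp add: abs_mult mult_right_mono)
  qed
  then have "isCont g 0"
    unfolding g_def by (rule isCont_powser) simp
  then have "(g \<longlongrightarrow> g 0) (at_right 0)"
    by (simp add: isCont_def filterlim_at_split)
  moreover have "g z = 0" if "0 < z" "z < 1" for z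
  proof -
    have "(\<lambda>n. c (n + m) * z^(n + m)) sums (0 - (\<Sum>i<m. c i * z^i))"
      using vanishes[OF that] by (subst sums_iff_shift) simp
    then have "(\<lambda>n. c (n + m) * z^(n + m)) sums 0" using less.IH by simp
    from sums_mult[OF this, of "1 / z^m"] have "(\<lambda>n. c (n + m) * z^n) sums 0"
      using that by (simp add: power_add)
    then show ?thesis unfolding g_def by (simp add: sums_iff)
  qed
  then have "(g \<longlongrightarrow> 0) (at_right 0)"
    by (intro tendsto_eventually) (auto simp: eventually_at_right_field intro!: exI[of _ 1])
  ultimately have "g 0 = 0" using tendsto_unique[OF trivial_limit_at_right_real] by blast
  moreover have "g 0 = c m" unfolding g_def using powser_zero[of "\<lambda>n. c (n + m)"] by simp
  ultimately show ?case by simp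
qed

lemma distr_eq_if_pgf_eq:
  fixes X :: "'a \<Rightarrow> nat" and Y :: "'b \<Rightarrow> nat"
  assumes M: "prob_space M" and N: "prob_space N"
    and X: "X \<in> measurable M (count_space UNIV)" and Y: "Y \<in> measurable N (count_space UNIV)"
    and pgf_eq: "\<And>z::real. 0 < z \<Longrightarrow> z < 1 \<Longrightarrow>
      prob_space.expectation M (\<lambda>\<omega>. z ^ X \<omega>) = prob_space.expectation N (\<lambda>\<omega>. z ^ Y \<omega>)"
  shows "distr M (count_space UNIV) X = distr N (count_space UNIV) Y"
proof (rule measure_eqI_countable[where A=UNIV])
  interpret M: prob_space M by (rule M)
  interpret N: prob_space N by (rule N)
  fix n :: nat
  have "(\<lambda>n. M.prob {\<omega>\<in>space M. X \<omega> = n} - N.prob {\<omega>\<in>space N. Y \<omega> = n}) n = 0"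
  proof (rule powser_coeffs_zero[where B=1])
    show "\<bar>M.prob {\<omega>\<in>space M. X \<omega> = k} - N.prob {\<omega>\<in>space N. Y \<omega> = k}\<bar> \<le> 1" for k
      using M.prob_le_1 N.prob_le_1 measure_nonneg[of M] measure_nonneg[of N] by (smt (verit))
    fix z :: real assume z: "0 < z" "z < 1"
    from sums_diff[OF M.nat_rv_pgf[OF X, of z] N.nat_rv_pgf[OF Y, of z]] z pgf_eq[OF z]
    show "(\<lambda>k. (M.prob {\<omega>\<in>space M. X \<omega> = k} - N.prob {\<omega>\<in>space N. Y \<omega> = k}) * z^k) sums 0"
      by (simp add: left_diff_distrib)
  qed
  then have "M.prob {\<omega>\<in>space M. X \<omega> = n} = N.prob {\<omega>\<in>space N. Y \<omega> = n}" by simp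
  moreover have "{\<omega>\<in>space M. X \<omega> = n} = X -` {n} \<inter> space M"
    "{\<omega>\<in>space N. Y \<omega> = n} = Y -` {n} \<inter> space N" by auto
  ultimately show "emeasure (distr M (count_space UNIV) X) {n} = emeasure (distr N (count_space UNIV) Y) {n}"
    using X Y by (simp add: emeasure_distr M.emeasure_eq_measure N.emeasure_eq_measure)
qed auto

theorem mainTheorem8:
  fixes \<alpha> \<beta> \<delta> \<theta> :: real
    and M :: "'a measure" and V :: "'a \<Rightarrow> nat"
    and N :: "'b measure" and K :: "'b \<Rightarrow> nat" and Y :: "nat \<Rightarrow> 'b \<Rightarrow> nat"
  defines "lam \<equiv> \<alpha> - \<beta>"
  defines "q \<equiv> \<beta> / \<alpha>"
  defines "\<gamma> \<equiv> \<delta> / lam"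
  assumes \<delta>_pos: "\<delta> > 0" and \<beta>_nonneg: "\<beta> \<ge> 0" and \<alpha>_gt: "\<alpha> > \<beta>" and \<theta>_pos: "\<theta> > 0"
  assumes M: "prob_space M"
    and V_meas: "V \<in> measurable M (count_space UNIV)"
    and V_pgf: "\<forall>z\<in>{0..<1::real}.
       ln (prob_space.expectation M (\<lambda>\<omega>. z ^ V \<omega>)) = - (\<theta> / \<gamma>) * hyp2F1 1 \<gamma> (1 + \<gamma>) (xi q z)"
  assumes N: "prob_space N"
    and K_meas: "K \<in> measurable N (count_space UNIV)"
    and Y_meas: "\<And>i. Y i \<in> measurable N (count_space UNIV)"
    and indep: "prob_space.indep_vars N (\<lambda>_. count_space UNIV)
                  (\<lambda>j. case j of None \<Rightarrow> K | Some i \<Rightarrow> Y i) UNIV"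
    and K_poisson: "\<And>k. measure N {\<omega>\<in>space N. K \<omega> = k} =
                  (\<theta> / ((1 - q) * \<gamma>)) ^ k / fact k * exp (- (\<theta> / ((1 - q) * \<gamma>)))"
    and Y_law: "\<And>i n. measure N {\<omega>\<in>space N. Y i \<omega> = n} = Y_prob \<alpha> \<beta> \<delta> n"
  shows "distr M (count_space UNIV) V = distr N (count_space UNIV) (\<lambda>\<omega>. \<Sum>i\<in>{1..K \<omega>}. Y i \<omega>)
    \<and> (\<forall>z\<in>{0..<1::real}.
         (LBINT t:{0..}. bd_pgf \<alpha> \<beta> t z * (\<delta> * exp (-\<delta> * t)))
           = 1 - (1 - q) * hyp2F1 1 \<gamma> (1 + \<gamma>) (xi q z))
    \<and> (\<forall>z\<in>{0..<1::real}.
         ln (prob_space.expectation M (\<lambda>\<omega>. z ^ V \<omega>))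
           = \<theta> / ((1 - q) * \<gamma>) * (LBINT t:{0..}. (bd_pgf \<alpha> \<beta> t z - 1) * (\<delta> * exp (-\<delta> * t))))"
proof -
  interpret PM: prob_space M by (rule M)
  interpret PN: prob_space N by (rule N)
  have q_less_1: "1 - q > 0" and \<gamma>_pos: "\<gamma> > 0"
    using \<alpha>_gt \<beta>_nonneg \<delta>_pos unfolding q_def \<gamma>_def lam_def by (auto simp: field_simps)
  define F where "F z = hyp2F1 1 \<gamma> (1 + \<gamma>) (xi q z)" for z
  note mixture = bd_pgf_mixture[OF \<delta>_pos \<beta>_nonneg \<alpha>_gt, folded lam_def q_def, folded \<gamma>_def]
  have Y_gf: "PN.expectation (\<lambda>\<omega>. z ^ Y i \<omega>) = 1 - (1 - q) * F z" if z: "0 \<le> z" "z < 1" for z i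
    using PN.Y_prob_law_pgf[OF \<alpha>_gt \<beta>_nonneg \<delta>_pos z Y_meas Y_law] mixture(2)[OF z]
    unfolding F_def by simp
  have S_gf: "PN.expectation (\<lambda>\<omega>. z ^ (\<Sum>i\<in>{1..K \<omega>}. Y i \<omega>)) = exp (- (\<theta> / \<gamma>) * F z)"
    if z: "0 \<le> z" "z < 1" for z
    using PN.compound_poisson_pgf[OF K_meas Y_meas indep _ _ Y_gf[OF z] K_poisson] z q_less_1
    by simp
  have V_gf: "PM.expectation (\<lambda>\<omega>. z ^ V \<omega>) = exp (- (\<theta> / \<gamma>) * F z)" if z: "0 < z" "z < 1" for z
    using V_pgf PM.nat_rv_pgf_pos[OF V_meas z(1)] z unfolding F_def
    by (metis atLeastLessThan_iff exp_ln less_imp_le)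
  have S_meas: "(\<lambda>\<omega>. \<Sum>i\<in>{1..K \<omega>}. Y i \<omega>) \<in> measurable N (count_space UNIV)"
    using K_meas Y_meas by measurable
  have "distr M (count_space UNIV) V = distr N (count_space UNIV) (\<lambda>\<omega>. \<Sum>i\<in>{1..K \<omega>}. Y i \<omega>)"
    by (rule distr_eq_if_pgf_eq[OF M N V_meas S_meas]) (use V_gf S_gf in force)
  moreover have "\<theta> / ((1 - q) * \<gamma>) * (- (1 - q) * F z) = - (\<theta> / \<gamma>) * F z" for z
    using q_less_1 \<gamma>_pos by (simp add: field_simps)
  ultimately show ?thesis
    using mixture(2,3) V_pgf unfolding F_def by auto
qed

end
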